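(* Let $\beta\in[0,1)$, let $r$ be a real constant, and let $(R_n)_{n\ge1}$ be a sequence of independent real random variables such that \[ \sup_nE(R_n^2)<\infty\qquad\text{and}\qquad \sqrt{n^\beta\log n}\,\bigl\{E(\overline{R}_n)-r\bigr\}\longrightarrow0, \] where $\overline{R}_n=\frac1n\sum_{i=1}^nR_i$. Then \[ \overline{R}_n\longrightarrow r\ \text{ a.s.}\qquad\text{and}\qquad \frac{\sum_{j=1}^n j^{\beta-1}E|\overline{R}_j-r|}{\sqrt{a_n(\beta)}}\longrightarrow0, \] where $a_n(\beta)=\log n$ if $\beta=0$ and $a_n(\beta)=n^\beta$ if $\beta\in(0,1)$.
   Context: In the paper's model the weights $R_n$ satisfy: $R_n$ is independent of $(M_1,\dots,M_n,R_1,\dots,R_{n-1})$ (where $M_i$ are random measures), so in particular the $R_n$ are mutually independent; only this independence of the $R_n$ is relevant to the statement. *)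

theory Defs
  imports "HOL-Probability.Probability"
begin

definition Rbar :: "(nat \<Rightarrow> 'a \<Rightarrow> real) \<Rightarrow> nat \<Rightarrow> 'a \<Rightarrow> real" where
  "Rbar R n x = (\<Sum>i=1..n. R i x) / real n"

definition a_seq :: "real \<Rightarrow> nat \<Rightarrow> real" where
  "a_seq \<beta> n = (if \<beta> = 0 then ln (real n) else real n powr \<beta>)"

end

theory Submission
  imports Defs "HOL-Library.Discrete_Functions" "HOL-Real_Asymp.Real_Asymp"
begin

text \<open>
  Write Rbar_n - r = S_n / n + (E Rbar_n - r), where S_n is the sum of the centred variables
  R_i - E R_i. Independence kills the cross terms, so E (S_A)^2 <= |A| C for every finite index
  set A. Along the squares n = m^2 this gives E (S_n / n)^2 <= C / m^2, which is summable, so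
  S_n / n tends to 0 almost surely along the squares; between two consecutive squares the
  fluctuation is controlled by Cauchy-Schwarz on a block of 2m + 1 terms. The rate hypothesis
  makes the deterministic part E Rbar_n - r vanish.

  For the second claim, E |Rbar_j - r| <= sqrt (C / j) + |E Rbar_j - r|. After multiplication
  by j^(beta - 1) both terms are o(w_j) for w_j = j^(beta - 1) / sqrt (j^beta log j), and w_j is
  at most a constant times the increment of the concave sequence sqrt (a_j(beta)). Hence the
  partial sums of w_j are O(sqrt (a_n(beta))), and a Toeplitz argument concludes.
\<close>

section \<open>Weighted sums and the normalising sequence\<close>

lemma one_le_ln:
  fixes x :: real assumes "3 \<le> x" shows "1 \<le> ln x"
  using assms exp_le by (subst ln_ge_iff) (auto intro: order.trans)

lemma sqrt_ln_increment_ge: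
  fixes x :: real assumes "2 \<le> x"
  shows "1 / (x * sqrt (ln x)) \<le> 2 * (sqrt (ln x) - sqrt (ln (x - 1)))"
proof -
  define a where "a = sqrt (ln x)"
  define b where "b = sqrt (ln (x - 1))"
  have ln_pos: "ln x > 0" and ln_nonneg: "ln (x - 1) \<ge> 0" using assms by auto
  have "ln ((x - 1) / x) \<le> (x - 1) / x - 1"
    using assms by (intro ln_le_minus_one) auto
  then have "ln (x - 1) - ln x \<le> - 1 / x"
    using assms by (simp add: ln_div field_simps)
  then have "1 / x \<le> a\<^sup>2 - b\<^sup>2" using ln_pos ln_nonneg by (simp add: a_def b_def)
  also have "\<dots> = (a - b) * (a + b)" by (simp add: power2_eq_square algebra_simps)
  also have "\<dots> \<le> (a - b) * (2 * a)"
    using assms by (intro mult_left_mono) (auto simp: a_def b_def)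
  finally have "1 / (x * a) \<le> 2 * (a - b)"
    using ln_pos assms by (simp add: a_def field_simps)
  then show ?thesis by (simp add: a_def b_def)
qed

lemma powr_increment_ge:
  fixes x p :: real assumes "1 < x" "0 < p" "p \<le> 1"
  shows "x powr (p - 1) \<le> (x powr p - (x - 1) powr p) / p"
proof -
  have "((x - 1) / x) powr p * 1 powr (1 - p) \<le> p * ((x - 1) / x) + (1 - p) * 1"
    using assms by (intro Youngs_inequality_0) auto
  then have "(x - 1) powr p / x powr p \<le> 1 - p / x"
    using assms by (simp add: powr_divide algebra_simps divide_simps)
  then have "(x - 1) powr p \<le> (1 - p / x) * x powr p"
    using assms by (simp add: divide_le_eq)
  also have "\<dots> = x powr p - p * x powr (p - 1)"
    using assms by (simp add: powr_diff algebra_simps)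
  finally show ?thesis using assms by (simp add: field_simps)
qed

lemma sum_le_telescope:
  fixes w s :: "nat \<Rightarrow> real"
  assumes "m \<le> n" and incr: "\<And>j. m < j \<Longrightarrow> j \<le> n \<Longrightarrow> w j \<le> s j - s (j - 1)"
  shows "(\<Sum>j\<in>{m<..n}. w j) \<le> s n - s m"
  using assms(1)
proof (induction n rule: dec_induct)
  case (step k)
  have "(\<Sum>j\<in>{m<..Suc k}. w j) = (\<Sum>j\<in>{m<..k}. w j) + w (Suc k)"
  proof -
    have "{m<..Suc k} = insert (Suc k) {m<..k}" using step.hyps by auto
    then show ?thesis by simp
  qed
  also have "\<dots> \<le> (s k - s m) + (s (Suc k) - s k)"
    using step incr[of "Suc k"] by (intro add_mono) auto
  finally show ?case by simp
qed simp

lemma sum_smallo_of_weights: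
  fixes d w s :: "nat \<Rightarrow> real"
  assumes small: "d \<in> o(w)" and w_nonneg: "\<And>j. 0 \<le> w j"
    and big: "(\<lambda>n. \<Sum>j=1..n. w j) \<in> O(s)" and s_lim: "filterlim s at_top sequentially"
  shows "(\<lambda>n. \<Sum>j=1..n. d j) \<in> o(s)"
proof (rule landau_o.smallI)
  fix c :: real assume c: "c > 0"
  obtain K where K: "K > 0" and sum_w: "\<forall>\<^sub>F n in at_top. norm (\<Sum>j=1..n. w j) \<le> K * norm (s n)"
    using big by (elim landau_o.bigE)
  define \<delta> where "\<delta> = c / (2 * K)"
  have "\<forall>\<^sub>F j in at_top. norm (d j) \<le> \<delta> * norm (w j)"
    using small c K by (intro landau_o.smallD) (auto simp: \<delta>_def)
  then obtain N where N: "\<And>j. j \<ge> N \<Longrightarrow> \<bar>d j\<bar> \<le> \<delta> * w j"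
    by (auto simp: eventually_at_top_linorder w_nonneg)
  define H where "H = (\<Sum>j<N. \<bar>d j\<bar>)"
  have sum_d: "(\<Sum>j=1..n. \<bar>d j\<bar>) \<le> H + \<delta> * (\<Sum>j=1..n. w j)" for n
  proof -
    have "(\<Sum>j=1..n. \<bar>d j\<bar>) \<le> (\<Sum>j=1..n. (if j < N then \<bar>d j\<bar> else 0) + \<delta> * w j)"
      using N c K w_nonneg by (intro sum_mono) (auto simp: \<delta>_def)
    also have "(\<Sum>j=1..n. (if j < N then \<bar>d j\<bar> else 0)) \<le> H"
      unfolding H_def sum.If_cases[OF finite_atLeastAtMost] by (auto intro: sum_mono2)
    ultimately show ?thesis by (simp add: sum.distrib sum_distrib_left)
  qed
  have "\<forall>\<^sub>F n in at_top. s n \<ge> max 1 (2 * H / c)"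
    using s_lim filterlim_at_top by blast
  with sum_w show "\<forall>\<^sub>F n in at_top. norm (\<Sum>j=1..n. d j) \<le> c * norm (s n)"
  proof eventually_elim
    case (elim n)
    have "norm (\<Sum>j=1..n. d j) \<le> H + \<delta> * (\<Sum>j=1..n. w j)"
      using sum_abs[of d "{1..n}"] sum_d[of n] unfolding real_norm_def by linarith
    also have "\<delta> * (\<Sum>j=1..n. w j) \<le> \<delta> * (K * s n)"
      using elim c K w_nonneg by (intro mult_left_mono) (auto simp: \<delta>_def sum_nonneg)
    also have "H + \<delta> * (K * s n) \<le> c * norm (s n)"
      using elim c K by (auto simp: \<delta>_def field_simps)
    finally show ?case by simp
  qed
qed

lemma sqrt_a_seq_at_top:
  assumes "0 \<le> \<beta>"
  shows "filterlim (\<lambda>n. sqrt (a_seq \<beta> n)) at_top sequentially"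
proof (cases "\<beta> = 0")
  case True
  then show ?thesis unfolding a_seq_def by simp real_asymp
next
  case False
  then have "\<beta> > 0" using assms by simp
  with False show ?thesis unfolding a_seq_def by simp real_asymp
qed

lemma weight_le_sqrt_a_seq_increment:
  fixes j :: nat
  assumes "0 \<le> \<beta>" "\<beta> \<le> 2" "3 \<le> j"
  shows "real j powr (\<beta> - 1) / sqrt (real j powr \<beta> * ln (real j))
           \<le> (if \<beta> = 0 then 2 else 2 / \<beta>) * (sqrt (a_seq \<beta> j) - sqrt (a_seq \<beta> (j - 1)))"
proof (cases "\<beta> = 0")
  case True
  have "real j powr (- 1) / sqrt (ln (real j)) = 1 / (real j * sqrt (ln (real j)))"
    using assms by (simp add: powr_minus divide_simps)
  also have "\<dots> \<le> 2 * (sqrt (ln (real j)) - sqrt (ln (real j - 1)))"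
    using assms by (intro sqrt_ln_increment_ge) auto
  finally show ?thesis using True assms by (simp add: a_seq_def of_nat_diff)
next
  case False
  then have \<beta>_pos: "\<beta> > 0" using assms by simp
  have "ln (real j) \<ge> 1" using assms by (intro one_le_ln) simp
  then have "real j powr (\<beta> - 1) / sqrt (real j powr \<beta> * ln (real j))
               \<le> real j powr (\<beta> - 1) / sqrt (real j powr \<beta>)"
    using assms by (intro divide_left_mono real_sqrt_le_mono) (auto simp: mult_le_cancel_left1)
  also have "\<dots> = real j powr (\<beta> - 1) / real j powr (\<beta> / 2)"
    by (simp add: powr_half_sqrt_powr)
  also have "\<dots> = real j powr (\<beta> / 2 - 1)"
    by (simp add: diff_divide_distrib flip: powr_diff)
  also have "\<dots> \<le> (real j powr (\<beta> / 2) - (real j - 1) powr (\<beta> / 2)) / (\<beta> / 2)"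
    using assms \<beta>_pos by (intro powr_increment_ge) auto
  finally show ?thesis
    using False assms by (simp add: a_seq_def powr_half_sqrt_powr field_simps)
qed

lemma sum_weight_bigo_sqrt_a_seq:
  assumes "0 \<le> \<beta>" "\<beta> \<le> 2"
  shows "(\<lambda>n. \<Sum>j=1..n. real j powr (\<beta> - 1) / sqrt (real j powr \<beta> * ln (real j)))
           \<in> O(\<lambda>n. sqrt (a_seq \<beta> n))"
proof -
  define w where "w j = real j powr (\<beta> - 1) / sqrt (real j powr \<beta> * ln (real j))" for j :: nat
  define s where "s n = sqrt (a_seq \<beta> n)" for n
  define K where "K = (if \<beta> = 0 then 2 else 2 / \<beta>)"
  have K: "K \<ge> 0" using assms by (simp add: K_def)
  have w_nonneg: "0 \<le> w j" for j
    by (cases "j = 0") (auto simp: w_def intro!: divide_nonneg_nonneg)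
  have sum_w: "(\<Sum>j=1..n. w j) \<le> (\<Sum>j=1..2. w j) + K * s n" if "n \<ge> 2" for n
  proof -
    have split: "{1..n} = {1..2} \<union> {2<..n}" using that by auto
    have "(\<Sum>j=1..n. w j) = (\<Sum>j=1..2. w j) + (\<Sum>j\<in>{2<..n}. w j)"
      unfolding split by (subst sum.union_disjoint) auto
    also have "(\<Sum>j\<in>{2<..n}. w j) \<le> K * s n - K * s 2"
      using that weight_le_sqrt_a_seq_increment[OF assms]
      by (intro sum_le_telescope) (auto simp: w_def s_def K_def right_diff_distrib)
    also have "K * s 2 \<ge> 0" using K by (simp add: s_def a_seq_def)
    ultimately show ?thesis by linarith
  qed
  have "\<forall>\<^sub>F n in sequentially. s n \<ge> 1"
    using sqrt_a_seq_at_top[OF assms(1)] unfolding s_def filterlim_at_top by blast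
  then have "\<forall>\<^sub>F n in sequentially. norm (\<Sum>j=1..n. w j) \<le> ((\<Sum>j=1..2. w j) + K) * norm (s n)"
    using eventually_ge_at_top[of 2]
  proof eventually_elim
    case (elim n)
    have "0 \<le> (\<Sum>j=1..2. w j)" by (intro sum_nonneg w_nonneg)
    then have "(\<Sum>j=1..2. w j) \<le> (\<Sum>j=1..2. w j) * s n"
      using mult_left_mono[OF elim(1)] by simp
    then show ?case using sum_w[of n] elim w_nonneg by (simp add: sum_nonneg algebra_simps)
  qed
  then show ?thesis unfolding w_def s_def by (rule bigoI)
qed

lemma weighted_error_in_smallo_weight:
  fixes e :: "nat \<Rightarrow> real"
  assumes "0 \<le> \<beta>" "\<beta> < 1" "0 \<le> C"
    and lim: "(\<lambda>j. sqrt (real j powr \<beta> * ln (real j)) * e j) \<longlonglongrightarrow> 0"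
  shows "(\<lambda>j. real j powr (\<beta> - 1) * (sqrt (C / real j) + e j))
           \<in> o(\<lambda>j. real j powr (\<beta> - 1) / sqrt (real j powr \<beta> * ln (real j)))"
    (is "_ \<in> o(?w)")
proof -
  have "(\<lambda>j. sqrt C * (real j powr (\<beta> - 1) / sqrt (real j))) \<in> o(?w)"
  proof (cases "C = 0")
    case False
    have "(\<lambda>j. real j powr (\<beta> - 1) / sqrt (real j)) \<in> o(?w)"
      using assms by real_asymp
    then show ?thesis using False by (subst landau_o.small.cmult_in_iff) auto
  qed simp
  then have variance_part: "(\<lambda>j. real j powr (\<beta> - 1) * sqrt (C / real j)) \<in> o(?w)"
    by (simp add: real_sqrt_divide ac_simps)
  have "e \<in> o(\<lambda>j. 1 / sqrt (real j powr \<beta> * ln (real j)))"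
  proof (rule smalloI_tendsto)
    show "(\<lambda>j. e j / (1 / sqrt (real j powr \<beta> * ln (real j)))) \<longlonglongrightarrow> 0"
      using lim by (simp add: mult.commute)
    show "\<forall>\<^sub>F j in sequentially. 1 / sqrt (real j powr \<beta> * ln (real j)) \<noteq> 0"
      using eventually_ge_at_top[of 2] by eventually_elim auto
  qed
  then have "(\<lambda>j. real j powr (\<beta> - 1) * e j)
               \<in> o(\<lambda>j. real j powr (\<beta> - 1) * (1 / sqrt (real j powr \<beta> * ln (real j))))"
    by (rule landau_o.small.mult_left)
  then have bias_part: "(\<lambda>j. real j powr (\<beta> - 1) * e j) \<in> o(?w)"
    by simp
  show ?thesis
    using sum_in_smallo(1)[OF variance_part bias_part] by (simp add: distrib_left)
qed

lemma weighted_sum_tendsto_zero: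
  fixes f e :: "nat \<Rightarrow> real"
  assumes "0 \<le> \<beta>" "\<beta> < 1" "0 \<le> C"
    and f_nonneg: "\<And>j. 1 \<le> j \<Longrightarrow> 0 \<le> f j"
    and f_le: "\<And>j. 1 \<le> j \<Longrightarrow> f j \<le> sqrt (C / real j) + e j"
    and lim: "(\<lambda>j. sqrt (real j powr \<beta> * ln (real j)) * e j) \<longlonglongrightarrow> 0"
  shows "(\<lambda>n. (\<Sum>j=1..n. real j powr (\<beta> - 1) * f j) / sqrt (a_seq \<beta> n)) \<longlonglongrightarrow> 0"
proof -
  have w_nonneg: "0 \<le> real j powr (\<beta> - 1) / sqrt (real j powr \<beta> * ln (real j))" for j :: nat
    by (cases "j = 0") (auto intro!: divide_nonneg_nonneg)
  have "(\<lambda>n. \<Sum>j=1..n. real j powr (\<beta> - 1) * (sqrt (C / real j) + e j))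
          \<in> o(\<lambda>n. sqrt (a_seq \<beta> n))"
    using weighted_error_in_smallo_weight[OF assms(1-3) lim] w_nonneg
      sum_weight_bigo_sqrt_a_seq[of \<beta>] sqrt_a_seq_at_top[OF assms(1)] assms(1,2)
    by (intro sum_smallo_of_weights) auto
  then have bound_lim: "(\<lambda>n. (\<Sum>j=1..n. real j powr (\<beta> - 1) * (sqrt (C / real j) + e j))
                           / sqrt (a_seq \<beta> n)) \<longlonglongrightarrow> 0"
    by (rule smalloD_tendsto)
  have a_nonneg: "\<forall>\<^sub>F n in sequentially. 0 \<le> sqrt (a_seq \<beta> n)"
    using eventually_ge_at_top[of 1] by eventually_elim (simp add: a_seq_def)
  show ?thesis
  proof (rule tendsto_sandwich[OF _ _ tendsto_const bound_lim])
    show "\<forall>\<^sub>F n in sequentially. 0 \<le> (\<Sum>j=1..n. real j powr (\<beta> - 1) * f j) / sqrt (a_seq \<beta> n)"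
      using a_nonneg
      by eventually_elim (auto intro!: divide_nonneg_nonneg sum_nonneg mult_nonneg_nonneg f_nonneg)
    show "\<forall>\<^sub>F n in sequentially. (\<Sum>j=1..n. real j powr (\<beta> - 1) * f j) / sqrt (a_seq \<beta> n)
            \<le> (\<Sum>j=1..n. real j powr (\<beta> - 1) * (sqrt (C / real j) + e j)) / sqrt (a_seq \<beta> n)"
      using a_nonneg by eventually_elim (auto intro!: divide_right_mono sum_mono mult_left_mono f_le)
  qed
qed

lemma tendsto_zero_of_sqrt_powr_ln_mult:
  fixes u :: "nat \<Rightarrow> real"
  assumes "0 \<le> \<beta>" and lim: "(\<lambda>n. sqrt (real n powr \<beta> * ln (real n)) * u n) \<longlonglongrightarrow> 0"
  shows "u \<longlonglongrightarrow> 0"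
proof (rule tendsto_rabs_zero_cancel, rule tendsto_sandwich[OF _ _ tendsto_const tendsto_rabs_zero[OF lim]])
  show "\<forall>\<^sub>F n in sequentially. \<bar>u n\<bar> \<le> \<bar>sqrt (real n powr \<beta> * ln (real n)) * u n\<bar>"
    using eventually_ge_at_top[of 3]
  proof eventually_elim
    case (elim n)
    have "1 \<le> real n powr \<beta> * ln (real n)"
      using elim assms(1) one_le_ln[of "real n"] ge_one_powr_ge_zero[of "real n" \<beta>]
        mult_mono[of 1 "real n powr \<beta>" 1 "ln (real n)"]
      by simp
    then show ?case by (simp add: abs_mult mult_le_cancel_right1)
  qed
qed simp

section \<open>A strong law for square-integrable independent variables\<close>

lemma filterlim_floor_sqrt_at_top: "filterlim floor_sqrt at_top at_top"
  unfolding filterlim_at_top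
proof
  fix k :: nat
  show "\<forall>\<^sub>F n in at_top. k \<le> floor_sqrt n"
    using eventually_ge_at_top[of "k\<^sup>2"] by eventually_elim (rule le_floor_sqrtI)
qed

lemma mean_abs_le_square_block_bound:
  fixes a :: "nat \<Rightarrow> real"
  assumes "1 \<le> n"
  defines "m \<equiv> floor_sqrt n"
  shows "\<bar>(\<Sum>i=1..n. a i) / real n\<bar>
           \<le> \<bar>(\<Sum>i=1..m\<^sup>2. a i) / real m ^ 2\<bar>
             + sqrt (real (2 * m + 1) * (\<Sum>i\<in>{m\<^sup>2<..(Suc m)\<^sup>2}. (a i)\<^sup>2) / real m ^ 4)"
proof -
  define B where "B = {m\<^sup>2<..(Suc m)\<^sup>2}"
  define D where "D = (\<Sum>i\<in>B. \<bar>a i\<bar>)"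
  have m_pos: "real m ^ 2 > 0" using assms by (simp add: m_def Suc_le_eq)
  have m_le: "m\<^sup>2 \<le> n" and le_m: "n < (Suc m)\<^sup>2"
    by (auto simp: m_def intro: Suc_floor_sqrt_power2_gt)
  have split: "{1..n} = {1..m\<^sup>2} \<union> {m\<^sup>2<..n}" using m_le by auto
  have "\<bar>\<Sum>i=1..n. a i\<bar> \<le> \<bar>\<Sum>i=1..m\<^sup>2. a i\<bar> + \<bar>\<Sum>i\<in>{m\<^sup>2<..n}. a i\<bar>"
    unfolding split by (subst sum.union_disjoint) auto
  also have "\<bar>\<Sum>i\<in>{m\<^sup>2<..n}. a i\<bar> \<le> (\<Sum>i\<in>{m\<^sup>2<..n}. \<bar>a i\<bar>)" by (rule sum_abs)
  also have "\<dots> \<le> D" unfolding D_def B_def using le_m by (intro sum_mono2) auto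
  finally have sum_le: "\<bar>\<Sum>i=1..n. a i\<bar> \<le> \<bar>\<Sum>i=1..m\<^sup>2. a i\<bar> + D" by simp
  have "card B = 2 * m + 1" by (simp add: B_def power2_eq_square)
  then have "D\<^sup>2 \<le> real (2 * m + 1) * (\<Sum>i\<in>B. (a i)\<^sup>2)"
    using Cauchy_Schwarz_ineq_sum[of "\<lambda>i. \<bar>a i\<bar>" "\<lambda>_. 1" B] by (simp add: D_def mult.commute)
  then have "(D / real m ^ 2)\<^sup>2 \<le> real (2 * m + 1) * (\<Sum>i\<in>B. (a i)\<^sup>2) / real m ^ 4"
    by (simp add: power_divide divide_right_mono flip: power_mult)
  then have D_le: "D / real m ^ 2 \<le> sqrt (real (2 * m + 1) * (\<Sum>i\<in>B. (a i)\<^sup>2) / real m ^ 4)"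
    by (rule real_le_rsqrt)
  have "real m ^ 2 \<le> real n" using m_le by (metis of_nat_le_iff of_nat_power)
  then have "\<bar>(\<Sum>i=1..n. a i) / real n\<bar> \<le> \<bar>\<Sum>i=1..n. a i\<bar> / real m ^ 2"
    using m_pos by (simp add: frac_le)
  also have "\<dots> \<le> (\<bar>\<Sum>i=1..m\<^sup>2. a i\<bar> + D) / real m ^ 2"
    using sum_le m_pos by (simp add: divide_right_mono)
  finally show ?thesis
    using D_le m_pos by (simp add: B_def add_divide_distrib)
qed

lemma (in prob_space) indep_vars_expectation_mult_eq_zero:
  fixes X :: "'i \<Rightarrow> 'a \<Rightarrow> real"
  assumes "indep_vars (\<lambda>_. borel) X I" and "\<And>i. i \<in> I \<Longrightarrow> integrable M (X i)"
    and "\<And>i. i \<in> I \<Longrightarrow> expectation (X i) = 0"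
    and "a \<in> I" "b \<in> I" "a \<noteq> b"
  shows "integrable M (\<lambda>x. X a x * X b x)" "expectation (\<lambda>x. X a x * X b x) = 0"
proof -
  have indep: "indep_vars (\<lambda>_. borel) X {a, b}"
    using assms by (auto intro: indep_vars_subset)
  have "integrable M (\<lambda>x. \<Prod>i\<in>{a, b}. X i x)"
    using indep assms by (intro indep_vars_integrable) auto
  then show "integrable M (\<lambda>x. X a x * X b x)" using assms by simp
  have "expectation (\<lambda>x. \<Prod>i\<in>{a, b}. X i x) = (\<Prod>i\<in>{a, b}. expectation (X i))"
    using indep assms by (intro indep_vars_lebesgue_integral) auto
  then show "expectation (\<lambda>x. X a x * X b x) = 0" using assms by simp
qed

lemma (in prob_space) expectation_sum_square_le_card:
  fixes X :: "'i \<Rightarrow> 'a \<Rightarrow> real"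
  assumes indep: "indep_vars (\<lambda>_. borel) X I" and int: "\<And>i. i \<in> I \<Longrightarrow> integrable M (X i)"
    and mean: "\<And>i. i \<in> I \<Longrightarrow> expectation (X i) = 0"
    and sq: "\<And>i. i \<in> I \<Longrightarrow> integrable M (\<lambda>x. (X i x)\<^sup>2)"
    and sq_le: "\<And>i. i \<in> I \<Longrightarrow> expectation (\<lambda>x. (X i x)\<^sup>2) \<le> C"
    and "finite A" "A \<subseteq> I"
  shows "integrable M (\<lambda>x. (\<Sum>i\<in>A. X i x)\<^sup>2) \<and>
         expectation (\<lambda>x. (\<Sum>i\<in>A. X i x)\<^sup>2) \<le> real (card A) * C"
  using \<open>finite A\<close> \<open>A \<subseteq> I\<close>
proof (induction A rule: finite_induct)
  case (insert a A)
  define S where "S x = (\<Sum>i\<in>A. X i x)" for x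
  have a: "a \<in> I" and IH: "integrable M (\<lambda>x. (S x)\<^sup>2)" "expectation (\<lambda>x. (S x)\<^sup>2) \<le> card A * C"
    using insert by (auto simp: S_def)
  have cross: "integrable M (\<lambda>x. X a x * X i x)" "expectation (\<lambda>x. X a x * X i x) = 0" if "i \<in> A" for i
    using indep_vars_expectation_mult_eq_zero[OF indep int mean, of a i] a that insert by auto
  have cross_int: "integrable M (\<lambda>x. X a x * S x)"
    unfolding S_def sum_distrib_left using cross by auto
  have cross_zero: "expectation (\<lambda>x. X a x * S x) = 0"
    unfolding S_def sum_distrib_left using cross by (subst Bochner_Integration.integral_sum) auto
  have expand: "(\<lambda>x. (\<Sum>i\<in>insert a A. X i x)\<^sup>2) = (\<lambda>x. (X a x)\<^sup>2 + 2 * (X a x * S x) + (S x)\<^sup>2)"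
    using insert by (simp add: S_def power2_eq_square algebra_simps)
  have "integrable M (\<lambda>x. (X a x)\<^sup>2 + 2 * (X a x * S x) + (S x)\<^sup>2)"
    using sq[OF a] cross_int IH(1) by auto
  moreover have "expectation (\<lambda>x. (X a x)\<^sup>2 + 2 * (X a x * S x) + (S x)\<^sup>2)
      = expectation (\<lambda>x. (X a x)\<^sup>2) + 2 * expectation (\<lambda>x. X a x * S x) + expectation (\<lambda>x. (S x)\<^sup>2)"
    using sq[OF a] cross_int IH(1) by simp
  ultimately show ?case
    unfolding expand using sq_le[OF a] cross_zero IH(2) insert by (simp add: algebra_simps)
qed simp

lemma (in prob_space) indep_vars_square_integrable_imp_integrable:
  fixes R :: "'i \<Rightarrow> 'a \<Rightarrow> real"
  assumes "indep_vars (\<lambda>_. borel) R I" "i \<in> I" "integrable M (\<lambda>x. (R i x)\<^sup>2)"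
  shows "integrable M (R i)"
proof (rule square_integrable_imp_integrable)
  show "R i \<in> borel_measurable M" using assms(1,2) unfolding indep_vars_def by auto
qed (rule assms(3))

lemma (in prob_space) centered_sum_square_le_card:
  fixes R :: "'i \<Rightarrow> 'a \<Rightarrow> real"
  assumes indep: "indep_vars (\<lambda>_. borel) R I"
    and sq: "\<And>i. i \<in> I \<Longrightarrow> integrable M (\<lambda>x. (R i x)\<^sup>2)"
    and sq_le: "\<And>i. i \<in> I \<Longrightarrow> expectation (\<lambda>x. (R i x)\<^sup>2) \<le> C"
    and "finite A" "A \<subseteq> I"
  shows "integrable M (\<lambda>x. (\<Sum>i\<in>A. R i x - expectation (R i))\<^sup>2) \<and>
         expectation (\<lambda>x. (\<Sum>i\<in>A. R i x - expectation (R i))\<^sup>2) \<le> real (card A) * C"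
proof (rule expectation_sum_square_le_card[of _ I])
  have int: "integrable M (R i)" if "i \<in> I" for i
    using indep_vars_square_integrable_imp_integrable[OF indep that sq[OF that]] .
  show "indep_vars (\<lambda>_. borel) (\<lambda>i x. R i x - expectation (R i)) I"
    by (rule indep_vars_compose2[OF indep]) auto
  show "integrable M (\<lambda>x. R i x - expectation (R i))" if "i \<in> I" for i
    using int[OF that] by auto
  show "expectation (\<lambda>x. R i x - expectation (R i)) = 0" if "i \<in> I" for i
    using int[OF that] by (simp add: prob_space)
  show "integrable M (\<lambda>x. (R i x - expectation (R i))\<^sup>2)" if "i \<in> I" for i
    using int[OF that] sq[OF that] by (simp add: power2_diff)
  show "expectation (\<lambda>x. (R i x - expectation (R i))\<^sup>2) \<le> C" if "i \<in> I" for i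
    using variance_eq[OF int[OF that] sq[OF that]] sq_le[OF that] zero_le_power2[of "expectation (R i)"]
    by linarith
qed (use assms in auto)

lemma (in prob_space) expectation_abs_le_sqrt_expectation_square:
  fixes Y :: "'a \<Rightarrow> real"
  assumes "Y \<in> borel_measurable M" and "integrable M (\<lambda>x. (Y x)\<^sup>2)"
  shows "integrable M (\<lambda>x. \<bar>Y x\<bar>)" "expectation (\<lambda>x. \<bar>Y x\<bar>) \<le> sqrt (expectation (\<lambda>x. (Y x)\<^sup>2))"
proof -
  show int: "integrable M (\<lambda>x. \<bar>Y x\<bar>)"
    using square_integrable_imp_integrable[OF assms] by simp
  have "0 \<le> variance (\<lambda>x. \<bar>Y x\<bar>)" by (rule variance_positive)
  also have "\<dots> = expectation (\<lambda>x. (Y x)\<^sup>2) - (expectation (\<lambda>x. \<bar>Y x\<bar>))\<^sup>2"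
    using int assms(2) by (subst variance_eq) auto
  finally show "expectation (\<lambda>x. \<bar>Y x\<bar>) \<le> sqrt (expectation (\<lambda>x. (Y x)\<^sup>2))"
    by (intro real_le_rsqrt) simp
qed

lemma (in prob_space) expectation_abs_mean_le:
  fixes X :: "nat \<Rightarrow> 'a \<Rightarrow> real"
  assumes "1 \<le> n" and meas: "\<And>i. 1 \<le> i \<Longrightarrow> i \<le> n \<Longrightarrow> X i \<in> borel_measurable M"
    and "integrable M (\<lambda>x. (\<Sum>i=1..n. X i x)\<^sup>2)"
    and "expectation (\<lambda>x. (\<Sum>i=1..n. X i x)\<^sup>2) \<le> real n * C"
  shows "expectation (\<lambda>x. \<bar>(\<Sum>i=1..n. X i x) / real n + c\<bar>) \<le> sqrt (C / real n) + \<bar>c\<bar>"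
proof -
  define Y where "Y x = (\<Sum>i=1..n. X i x) / real n" for x
  have "(\<lambda>x. (Y x)\<^sup>2) = (\<lambda>x. (\<Sum>i=1..n. X i x)\<^sup>2 / real n ^ 2)"
    by (simp add: Y_def power_divide)
  then have Y_sq: "integrable M (\<lambda>x. (Y x)\<^sup>2)" "expectation (\<lambda>x. (Y x)\<^sup>2) \<le> C / real n"
    using assms divide_right_mono[OF assms(4), of "real n ^ 2"]
    by (auto simp: power2_eq_square)
  have Y_meas: "Y \<in> borel_measurable M" unfolding Y_def[abs_def] using meas by measurable
  note Y_abs = expectation_abs_le_sqrt_expectation_square[OF Y_meas Y_sq(1)]
  have "integrable M Y" by (rule square_integrable_imp_integrable[OF Y_meas Y_sq(1)])
  then have "expectation (\<lambda>x. \<bar>Y x + c\<bar>) \<le> expectation (\<lambda>x. \<bar>Y x\<bar> + \<bar>c\<bar>)"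
    by (intro integral_mono) (auto simp: abs_triangle_ineq)
  also have "\<dots> = expectation (\<lambda>x. \<bar>Y x\<bar>) + \<bar>c\<bar>" using Y_abs(1) by (simp add: prob_space)
  also have "expectation (\<lambda>x. \<bar>Y x\<bar>) \<le> sqrt (C / real n)"
    using Y_abs(2) Y_sq(2) by (meson order_trans real_sqrt_le_mono)
  finally show ?thesis by (simp add: Y_def)
qed

lemma (in prob_space) AE_tendsto_zero_of_summable_expectation:
  fixes Z :: "nat \<Rightarrow> 'a \<Rightarrow> real"
  assumes int: "\<And>m. integrable M (Z m)" and nonneg: "\<And>m x. x \<in> space M \<Longrightarrow> 0 \<le> Z m x"
    and summable: "summable (\<lambda>m. expectation (Z m))"
  shows "AE x in M. (\<lambda>m. Z m x) \<longlonglongrightarrow> 0"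
proof -
  have [measurable]: "\<And>m. Z m \<in> borel_measurable M" using int by auto
  have "(\<integral>\<^sup>+x. (\<Sum>m. ennreal (Z m x)) \<partial>M) = (\<Sum>m. \<integral>\<^sup>+x. ennreal (Z m x) \<partial>M)"
    by (rule nn_integral_suminf) auto
  also have "\<dots> = (\<Sum>m. ennreal (expectation (Z m)))"
    by (intro suminf_cong nn_integral_eq_integral int) (auto simp: nonneg)
  also have "\<dots> = ennreal (\<Sum>m. expectation (Z m))"
    by (intro suminf_ennreal2 summable integral_nonneg_AE) (auto simp: nonneg)
  finally have "AE x in M. (\<Sum>m. ennreal (Z m x)) \<noteq> \<infinity>"
    by (intro nn_integral_noteq_infinite) auto
  then show ?thesis
  proof (rule AE_mp, intro AE_I2 impI)
    fix x assume "x \<in> space M" and "(\<Sum>m. ennreal (Z m x)) \<noteq> \<infinity>"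
    then have "summable (\<lambda>m. Z m x)" by (intro summable_suminf_not_top) (auto simp: nonneg)
    then show "(\<lambda>m. Z m x) \<longlonglongrightarrow> 0" by (rule summable_LIMSEQ_zero)
  qed
qed

lemma (in prob_space) AE_square_mean_subsequence_tendsto_zero:
  fixes X :: "nat \<Rightarrow> 'a \<Rightarrow> real"
  assumes int: "\<And>n. integrable M (\<lambda>x. (\<Sum>i=1..n. X i x)\<^sup>2)"
    and le: "\<And>n. expectation (\<lambda>x. (\<Sum>i=1..n. X i x)\<^sup>2) \<le> real n * C"
  shows "AE x in M. (\<lambda>m. ((\<Sum>i=1..m\<^sup>2. X i x) / real m ^ 2)\<^sup>2) \<longlonglongrightarrow> 0"
proof (rule AE_tendsto_zero_of_summable_expectation)
  define T where "T m = (\<lambda>x. ((\<Sum>i=1..m\<^sup>2. X i x) / real m ^ 2)\<^sup>2)" for m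
  have T_eq: "T m = (\<lambda>x. (\<Sum>i=1..m\<^sup>2. X i x)\<^sup>2 / real m ^ 4)" for m
    by (auto simp: T_def power_divide simp flip: power_mult)
  show "integrable M (T m)" for m unfolding T_eq using int by simp
  have "expectation (T m) \<le> real (m\<^sup>2) * C / real m ^ 4" for m
    unfolding T_eq using le[of "m\<^sup>2"] by (simp add: divide_right_mono)
  also have "real (m\<^sup>2) * C / real m ^ 4 = C * inverse (real m ^ 2)" for m
    by (cases "m = 0") (simp_all add: field_simps eval_nat_numeral)
  finally have T_le: "expectation (T m) \<le> C * inverse (real m ^ 2)" for m .
  show "summable (\<lambda>m. expectation (T m))"
  proof (rule summable_comparison_test')
    show "summable (\<lambda>m. C * inverse (real m ^ 2))"
      by (intro summable_mult inverse_power_summable) auto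
    have "0 \<le> expectation (T m)" for m by (rule integral_nonneg_AE) (simp add: T_def)
    then show "norm (expectation (T m)) \<le> C * inverse (real m ^ 2)" for m using T_le by simp
  qed
qed simp

lemma (in prob_space) AE_block_square_sum_tendsto_zero:
  fixes X :: "nat \<Rightarrow> 'a \<Rightarrow> real"
  assumes int: "\<And>i. 1 \<le> i \<Longrightarrow> integrable M (\<lambda>x. (X i x)\<^sup>2)"
    and le: "\<And>i. 1 \<le> i \<Longrightarrow> expectation (\<lambda>x. (X i x)\<^sup>2) \<le> C"
  shows "AE x in M. (\<lambda>m. real (2 * m + 1) * (\<Sum>i\<in>{m\<^sup>2<..(Suc m)\<^sup>2}. (X i x)\<^sup>2) / real m ^ 4)
           \<longlonglongrightarrow> 0"
proof (rule AE_tendsto_zero_of_summable_expectation)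
  define V where "V m = (\<lambda>x. real (2 * m + 1) * (\<Sum>i\<in>{m\<^sup>2<..(Suc m)\<^sup>2}. (X i x)\<^sup>2) / real m ^ 4)" for m
  have block: "1 \<le> i" if "i \<in> {m\<^sup>2<..(Suc m)\<^sup>2}" for i m using that by simp
  show V_int: "integrable M (V m)" for m
    unfolding V_def by (intro integrable_divide integrable_mult_right Bochner_Integration.integrable_sum int) auto
  have "expectation (V m) = real (2 * m + 1) * (\<Sum>i\<in>{m\<^sup>2<..(Suc m)\<^sup>2}. expectation (\<lambda>x. (X i x)\<^sup>2)) / real m ^ 4" for m
    unfolding V_def using int block by (simp add: Bochner_Integration.integral_sum)
  also have "\<dots> m \<le> real (2 * m + 1) * (\<Sum>i\<in>{m\<^sup>2<..(Suc m)\<^sup>2}. C) / real m ^ 4" for m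
    using le block by (intro divide_right_mono mult_left_mono sum_mono) auto
  also have "\<dots> m = C * (real (2 * m + 1) ^ 2 / real m ^ 4)" for m
    by (simp add: power2_eq_square)
  finally have V_le: "expectation (V m) \<le> C * (real (2 * m + 1) ^ 2 / real m ^ 4)" for m .
  have "summable (\<lambda>m::nat. real (2 * m + 1) ^ 2 / real m ^ 4)"
  proof (rule summable_comparison_test_bigo)
    show "summable (\<lambda>m. norm (inverse (real m ^ 2)))"
      using inverse_power_summable[of 2, where 'a = real] by simp
    show "(\<lambda>m. real (2 * m + 1) ^ 2 / real m ^ 4) \<in> O(\<lambda>m. inverse (real m ^ 2))"
      by real_asymp
  qed
  then show "summable (\<lambda>m. expectation (V m))"
  proof (rule summable_comparison_test'[OF summable_mult])
    have "0 \<le> expectation (V m)" for m by (rule integral_nonneg_AE) (simp add: V_def sum_nonneg)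
    then show "norm (expectation (V m)) \<le> C * (real (2 * m + 1) ^ 2 / real m ^ 4)" for m
      using V_le by simp
  qed
qed (simp add: sum_nonneg)

lemma (in prob_space) AE_mean_tendsto_zero_of_sum_square_le:
  fixes X :: "nat \<Rightarrow> 'a \<Rightarrow> real"
  assumes sum_sq: "\<And>A. finite A \<Longrightarrow> A \<subseteq> {1..} \<Longrightarrow>
      integrable M (\<lambda>x. (\<Sum>i\<in>A. X i x)\<^sup>2) \<and> expectation (\<lambda>x. (\<Sum>i\<in>A. X i x)\<^sup>2) \<le> real (card A) * C"
  shows "AE x in M. (\<lambda>n. (\<Sum>i=1..n. X i x) / real n) \<longlonglongrightarrow> 0"
proof -
  define T where "T m x = ((\<Sum>i=1..m\<^sup>2. X i x) / real m ^ 2)\<^sup>2" for m x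
  define V where "V m x = real (2 * m + 1) * (\<Sum>i\<in>{m\<^sup>2<..(Suc m)\<^sup>2}. (X i x)\<^sup>2) / real m ^ 4" for m x
  have "AE x in M. (\<lambda>m. T m x) \<longlonglongrightarrow> 0"
    unfolding T_def using sum_sq[of "{1..n}" for n]
    by (intro AE_square_mean_subsequence_tendsto_zero) auto
  moreover have "AE x in M. (\<lambda>m. V m x) \<longlonglongrightarrow> 0"
    unfolding V_def using sum_sq[of "{i}" for i]
    by (intro AE_block_square_sum_tendsto_zero) auto
  ultimately show ?thesis
  proof eventually_elim
    case (elim x)
    have "(\<lambda>m. sqrt (T m x) + sqrt (V m x)) \<longlonglongrightarrow> 0"
      using tendsto_add[OF tendsto_real_sqrt[OF elim(1)] tendsto_real_sqrt[OF elim(2)]] by simp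
    then have lim: "(\<lambda>n. sqrt (T (floor_sqrt n) x) + sqrt (V (floor_sqrt n) x)) \<longlonglongrightarrow> 0"
      by (rule filterlim_compose[OF _ filterlim_floor_sqrt_at_top])
    have "\<forall>\<^sub>F n in sequentially.
            \<bar>(\<Sum>i=1..n. X i x) / real n\<bar> \<le> sqrt (T (floor_sqrt n) x) + sqrt (V (floor_sqrt n) x)"
      using eventually_ge_at_top[of 1]
    proof eventually_elim
      case (elim n)
      show ?case using mean_abs_le_square_block_bound[OF elim, of "\<lambda>i. X i x"]
        unfolding T_def V_def real_sqrt_abs .
    qed
    then have "(\<lambda>n. \<bar>(\<Sum>i=1..n. X i x) / real n\<bar>) \<longlonglongrightarrow> 0"
      by (intro tendsto_sandwich[OF _ _ tendsto_const lim]) auto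
    then show ?case by (rule tendsto_rabs_zero_cancel)
  qed
qed

section \<open>Running means\<close>

lemma (in prob_space) Rbar_eq_centered_mean:
  assumes "\<And>i. 1 \<le> i \<Longrightarrow> i \<le> n \<Longrightarrow> integrable M (R i)"
  shows "Rbar R n x = (\<Sum>i=1..n. R i x - expectation (R i)) / real n + expectation (Rbar R n)"
proof -
  have "expectation (Rbar R n) = (\<Sum>i=1..n. expectation (R i)) / real n"
    unfolding Rbar_def[abs_def] using assms by (simp add: Bochner_Integration.integral_sum)
  then show ?thesis by (simp add: Rbar_def sum_subtractf diff_divide_distrib)
qed

lemma (in prob_space) AE_Rbar_tendsto:
  fixes R :: "nat \<Rightarrow> 'a \<Rightarrow> real"
  assumes indep: "indep_vars (\<lambda>_. borel) R {1..}"
    and sq: "\<And>i. 1 \<le> i \<Longrightarrow> integrable M (\<lambda>x. (R i x)\<^sup>2)"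
    and sq_le: "\<And>i. 1 \<le> i \<Longrightarrow> expectation (\<lambda>x. (R i x)\<^sup>2) \<le> C"
    and mean: "(\<lambda>n. expectation (Rbar R n)) \<longlonglongrightarrow> r"
  shows "AE x in M. (\<lambda>n. Rbar R n x) \<longlonglongrightarrow> r"
proof -
  have int: "integrable M (R i)" if "1 \<le> i" for i
    using indep_vars_square_integrable_imp_integrable[OF indep _ sq] that by simp
  have "AE x in M. (\<lambda>n. (\<Sum>i=1..n. R i x - expectation (R i)) / real n) \<longlonglongrightarrow> 0"
  proof (rule AE_mean_tendsto_zero_of_sum_square_le)
    fix A :: "nat set" assume "finite A" "A \<subseteq> {1..}"
    then show "integrable M (\<lambda>x. (\<Sum>i\<in>A. R i x - expectation (R i))\<^sup>2) \<and>
        expectation (\<lambda>x. (\<Sum>i\<in>A. R i x - expectation (R i))\<^sup>2) \<le> real (card A) * C"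
      using sq sq_le by (intro centered_sum_square_le_card[OF indep]) auto
  qed
  then show ?thesis
  proof eventually_elim
    case (elim x)
    from tendsto_add[OF elim mean] show ?case
      using Rbar_eq_centered_mean[OF int] by simp
  qed
qed

lemma (in prob_space) expectation_abs_Rbar_le:
  fixes R :: "nat \<Rightarrow> 'a \<Rightarrow> real"
  assumes indep: "indep_vars (\<lambda>_. borel) R {1..}"
    and sq: "\<And>i. 1 \<le> i \<Longrightarrow> integrable M (\<lambda>x. (R i x)\<^sup>2)"
    and sq_le: "\<And>i. 1 \<le> i \<Longrightarrow> expectation (\<lambda>x. (R i x)\<^sup>2) \<le> C"
    and "1 \<le> n"
  shows "expectation (\<lambda>x. \<bar>Rbar R n x - r\<bar>) \<le> sqrt (C / real n) + \<bar>expectation (Rbar R n) - r\<bar>"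
proof -
  have int: "integrable M (R i)" if "1 \<le> i" for i
    using indep_vars_square_integrable_imp_integrable[OF indep _ sq] that by simp
  have "integrable M (\<lambda>x. (\<Sum>i=1..n. R i x - expectation (R i))\<^sup>2)"
    "expectation (\<lambda>x. (\<Sum>i=1..n. R i x - expectation (R i))\<^sup>2) \<le> real n * C"
    using centered_sum_square_le_card[OF indep, where A = "{1..n}"] sq sq_le by auto
  from expectation_abs_mean_le[OF \<open>1 \<le> n\<close> _ this, of "expectation (Rbar R n) - r"]
  show ?thesis
    using int Rbar_eq_centered_mean[OF int] by (simp add: add_diff_eq)
qed

theorem lemma6:
  fixes M :: "'a measure" and R :: "nat \<Rightarrow> 'a \<Rightarrow> real" and \<beta> r :: real
  assumes "prob_space M"
    and "0 \<le> \<beta>" and "\<beta> < 1"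
    and "prob_space.indep_vars M (\<lambda>_. borel) R {1..}"
    and "\<And>n. n \<ge> 1 \<Longrightarrow> integrable M (\<lambda>x. (R n x)\<^sup>2)"
    and "\<exists>C. \<forall>n\<ge>1. (\<integral>x. (R n x)\<^sup>2 \<partial>M) \<le> C"
    and "(\<lambda>n. sqrt (real n powr \<beta> * ln (real n)) * ((\<integral>x. Rbar R n x \<partial>M) - r)) \<longlonglongrightarrow> 0"
  shows "(AE x in M. (\<lambda>n. Rbar R n x) \<longlonglongrightarrow> r) \<and>
         (\<lambda>n. (\<Sum>j=1..n. real j powr (\<beta> - 1) * (\<integral>x. \<bar>Rbar R j x - r\<bar> \<partial>M))
             / sqrt (a_seq \<beta> n)) \<longlonglongrightarrow> 0"
proof -
  interpret prob_space M by fact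
  obtain C where C: "\<And>n. n \<ge> 1 \<Longrightarrow> expectation (\<lambda>x. (R n x)\<^sup>2) \<le> C" using assms(6) by blast
  have "0 \<le> expectation (\<lambda>x. (R 1 x)\<^sup>2)" by (rule integral_nonneg_AE) simp
  with C[of 1] have C_nonneg: "0 \<le> C" by linarith
  have "(\<lambda>n. expectation (Rbar R n) - r) \<longlonglongrightarrow> 0"
    by (rule tendsto_zero_of_sqrt_powr_ln_mult[OF assms(2,7)])
  then have "AE x in M. (\<lambda>n. Rbar R n x) \<longlonglongrightarrow> r"
    using assms(4,5) C by (intro AE_Rbar_tendsto) (auto simp: LIM_zero_iff)
  moreover have "(\<lambda>n. (\<Sum>j=1..n. real j powr (\<beta> - 1) * expectation (\<lambda>x. \<bar>Rbar R j x - r\<bar>))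
                   / sqrt (a_seq \<beta> n)) \<longlonglongrightarrow> 0"
  proof (rule weighted_sum_tendsto_zero[OF assms(2,3) C_nonneg])
    show "expectation (\<lambda>x. \<bar>Rbar R j x - r\<bar>) \<le> sqrt (C / real j) + \<bar>expectation (Rbar R j) - r\<bar>"
      if "1 \<le> j" for j
      using assms(4,5) C that by (intro expectation_abs_Rbar_le) auto
    have "0 \<le> real j powr \<beta> * ln (real j)" for j by (cases "j = 0") auto
    then show "(\<lambda>j. sqrt (real j powr \<beta> * ln (real j)) * \<bar>expectation (Rbar R j) - r\<bar>) \<longlonglongrightarrow> 0"
      using tendsto_rabs_zero[OF assms(7)] by (simp add: abs_mult)
  qed simp
  ultimately show ?thesis by blast
qed

end
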